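(* Let $A$ and $B$ be commutative rings with identity and let $\phi:A\to B$ be a surjective ring homomorphism with $\ker(\phi)=\langle\pi\rangle$ for some $\pi\in A$. If $B$ is a principal ideal ring, then for every ideal $I$ of $A$ there exists $a\in I$ such that $$I=\langle a\rangle+\pi(I:\pi).$$
   Context: For ideals $I,J$ of a commutative ring $R$, $(I:J)=\{x\in R: xJ\subseteq I\}$, and $(I:a)=(I:\langle a\rangle)$. *)

theory Defs
  imports "HOL-Algebra.Algebra"
begin

definition colon_ideal :: "('a, 'm) ring_scheme \<Rightarrow> 'a set \<Rightarrow> 'a set \<Rightarrow> 'a set" where
  "colon_ideal R I J = {x \<in> carrier R. \<forall>y \<in> J. x \<otimes>\<^bsub>R\<^esub> y \<in> I}"

definition principal_ideal_ring :: "('a, 'm) ring_scheme \<Rightarrow> bool" where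
  "principal_ideal_ring R \<longleftrightarrow> cring R \<and> (\<forall>J. ideal J R \<longrightarrow> principalideal J R)"

end

theory Submission
  imports Defs
begin

text \<open>Since \<open>\<phi>\<close> is onto and \<open>B\<close> is a principal ideal ring, \<open>\<phi>(I)\<close> is generated by \<open>\<phi>(a)\<close> for
  some \<open>a \<in> I\<close>. Then every \<open>x \<in> I\<close> agrees modulo \<open>ker \<phi>\<close> with a multiple of \<open>a\<close>, so
  \<open>I = \<langle>a\<rangle> + (I \<inter> ker \<phi>)\<close>; and \<open>I \<inter> \<langle>\<pi>\<rangle>\<close> is exactly \<open>\<pi>(I : \<pi>)\<close>.\<close>

lemma (in ring_hom_ring) ideal_image_surj:
  assumes surj: "h ` carrier R = carrier S" and I: "ideal I R"
  shows "ideal (h ` I) S"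
proof (rule idealI)
  interpret I: ideal I R by fact
  show "ring S" ..
  show "subgroup (h ` I) (add_monoid S)"
    using img_is_add_subgroup I.a_subgroup by blast
  fix x r assume "x \<in> h ` I" "r \<in> carrier S"
  then obtain a s where as: "a \<in> I" "s \<in> carrier R" "x = h a" "r = h s"
    using surj by blast
  then have "h (s \<otimes> a) = r \<otimes>\<^bsub>S\<^esub> x" "h (a \<otimes> s) = x \<otimes>\<^bsub>S\<^esub> r"
    by simp_all
  moreover have "s \<otimes> a \<in> I" "a \<otimes> s \<in> I"
    using as I.I_l_closed I.I_r_closed by simp_all
  ultimately show "r \<otimes>\<^bsub>S\<^esub> x \<in> h ` I" "x \<otimes>\<^bsub>S\<^esub> r \<in> h ` I"
    by (metis image_eqI)+
qed

lemma (in ring_hom_ring) image_cgenideal_surj: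
  assumes surj: "h ` carrier R = carrier S" and a: "a \<in> carrier R"
  shows "h ` (PIdl a) = PIdl\<^bsub>S\<^esub> (h a)"
proof -
  have "h ` (PIdl a) = (\<lambda>x. h x \<otimes>\<^bsub>S\<^esub> h a) ` carrier R"
    unfolding cgenideal_def Setcompr_eq_image image_image using a by simp
  also have "\<dots> = (\<lambda>y. y \<otimes>\<^bsub>S\<^esub> h a) ` carrier S"
    unfolding surj[symmetric] image_image ..
  finally show ?thesis
    by (simp add: cgenideal_def Setcompr_eq_image)
qed

lemma (in ring_hom_ring) principal_ideal_ring_image_generator:
  assumes surj: "h ` carrier R = carrier S" and pir: "principal_ideal_ring S"
    and I: "ideal I R"
  shows "\<exists>a \<in> I. h ` I = PIdl\<^bsub>S\<^esub> (h a)"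
proof -
  interpret S: cring S using pir by (simp add: principal_ideal_ring_def)
  have "principalideal (h ` I) S"
    using pir ideal_image_surj[OF surj I] by (simp add: principal_ideal_ring_def)
  then obtain b where b: "b \<in> carrier S" "h ` I = PIdl\<^bsub>S\<^esub> b"
    using principalideal.generate S.cgenideal_eq_genideal by metis
  then have "b \<in> h ` I" using S.cgenideal_self by simp
  then obtain a where "a \<in> I" "h a = b" by blast
  with b show ?thesis by blast
qed

lemma (in ring_hom_ring) ideal_eq_set_add_kernel:
  assumes I: "ideal I R" and JI: "J \<subseteq> I" and img: "h ` I \<subseteq> h ` J"
  shows "I = J <+>\<^bsub>R\<^esub> (I \<inter> a_kernel R S h)"
proof (intro equalityI subsetI)
  interpret I: ideal I R by fact
  fix x assume x: "x \<in> I"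
  then obtain j where j: "j \<in> J" "h x = h j" using img by blast
  have carr: "x \<in> carrier R" "j \<in> carrier R" using x j JI I.Icarr by auto
  have "x \<ominus> j \<in> I"
    using x j JI I.a_closed I.a_inv_closed unfolding a_minus_def by blast
  moreover have "h (x \<ominus> j) = \<zero>\<^bsub>S\<^esub>" using carr j(2) by (simp add: a_minus_def S.r_neg)
  moreover have "x = j \<oplus> (x \<ominus> j)" using carr by algebra
  ultimately show "x \<in> J <+>\<^bsub>R\<^esub> (I \<inter> a_kernel R S h)"
    using j(1) carr unfolding set_add_def' a_kernel_def' by blast
next
  interpret I: ideal I R by fact
  fix x assume "x \<in> J <+>\<^bsub>R\<^esub> (I \<inter> a_kernel R S h)"
  then show "x \<in> I" using JI I.a_closed unfolding set_add_def' by blast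
qed

lemma (in cring) cgenideal_mult_colon_ideal:
  assumes I: "ideal I R" and p: "p \<in> carrier R"
  shows "(\<lambda>x. p \<otimes> x) ` colon_ideal R I (PIdl p) = I \<inter> PIdl p"
proof (intro equalityI subsetI)
  fix y assume "y \<in> (\<lambda>x. p \<otimes> x) ` colon_ideal R I (PIdl p)"
  then obtain s where s: "s \<in> colon_ideal R I (PIdl p)" "y = p \<otimes> s" by blast
  then have "s \<in> carrier R" "s \<otimes> p \<in> I"
    using cgenideal_self[OF p] by (auto simp: colon_ideal_def)
  moreover have "y = s \<otimes> p" using s(2) p \<open>s \<in> carrier R\<close> by (simp add: m_comm)
  ultimately show "y \<in> I \<inter> PIdl p" by (auto simp: cgenideal_def)
next
  interpret I: ideal I R by fact
  fix y assume "y \<in> I \<inter> PIdl p"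
  then obtain s where s: "s \<in> carrier R" "y = s \<otimes> p" "s \<otimes> p \<in> I"
    by (auto simp: cgenideal_def)
  have "s \<otimes> (t \<otimes> p) \<in> I" if "t \<in> carrier R" for t
    using I.I_l_closed[OF s(3) that] that s(1) p by (simp add: m_lcomm)
  then have "s \<in> colon_ideal R I (PIdl p)"
    using s(1) by (auto simp: colon_ideal_def cgenideal_def)
  with s p show "y \<in> (\<lambda>x. p \<otimes> x) ` colon_ideal R I (PIdl p)"
    by (auto simp: m_comm)
qed

theorem corollary2p2:
  fixes A :: "('a, 'm) ring_scheme" and B :: "('b, 'n) ring_scheme"
    and \<phi> :: "'a \<Rightarrow> 'b" and \<pi> :: 'a
  assumes "cring A" and "cring B"
    and "\<phi> \<in> ring_hom A B"
    and "\<phi> ` carrier A = carrier B"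
    and "\<pi> \<in> carrier A"
    and "a_kernel A B \<phi> = PIdl\<^bsub>A\<^esub> \<pi>"
    and "principal_ideal_ring B"
  shows "\<forall>I. ideal I A \<longrightarrow>
           (\<exists>a \<in> I. I = (PIdl\<^bsub>A\<^esub> a) <+>\<^bsub>A\<^esub>
                         ((\<lambda>x. \<pi> \<otimes>\<^bsub>A\<^esub> x) ` colon_ideal A I (PIdl\<^bsub>A\<^esub> \<pi>)))"
proof (intro allI impI)
  fix I assume I: "ideal I A"
  interpret A: cring A by fact
  interpret B: cring B by fact
  interpret ring_hom_ring A B \<phi>
    using assms(3) by (simp add: ring_hom_ringI2 A.ring_axioms B.ring_axioms)
  obtain a where a: "a \<in> I" "\<phi> ` I = PIdl\<^bsub>B\<^esub> (\<phi> a)"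
    using principal_ideal_ring_image_generator[OF assms(4,7) I] by blast
  have "a \<in> carrier A" using a(1) I by (simp add: ideal.Icarr)
  then have "\<phi> ` I = \<phi> ` (PIdl\<^bsub>A\<^esub> a)"
    using a(2) image_cgenideal_surj[OF assms(4)] by simp
  then have "I = PIdl\<^bsub>A\<^esub> a <+>\<^bsub>A\<^esub> (I \<inter> PIdl\<^bsub>A\<^esub> \<pi>)"
    using ideal_eq_set_add_kernel[OF I] A.cgenideal_minimal[OF I a(1)] assms(6) by simp
  with a(1) show "\<exists>a \<in> I. I = PIdl\<^bsub>A\<^esub> a <+>\<^bsub>A\<^esub>
                         ((\<lambda>x. \<pi> \<otimes>\<^bsub>A\<^esub> x) ` colon_ideal A I (PIdl\<^bsub>A\<^esub> \<pi>))"
    using A.cgenideal_mult_colon_ideal[OF I assms(5)] by auto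
qed

end
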